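(* For a word $w=w_1\cdots w_n$ over $\{1,2,3\}$ let $s(w)=|\{i : 1\le i\le n-2,\ w_{i+2}-w_i=2\}|$. Then for all $n\ge 0$ and $s\ge 0$, the number of words $w\in\{1,2,3\}^{2n}$ with $s(w)=s$ equals $$\sum_{r=0}^{n}\sum_{m=0}^{r}(-1)^{m+r+s}\binom{m+r}{2m}\binom{n-m}{s}9^{m},$$ and the number of words $w\in\{1,2,3\}^{2n+1}$ with $s(w)=s$ equals $$\sum_{r=0}^{n}\sum_{m=0}^{r}(-1)^{m+r+s}\binom{m+r+1}{2m+1}\binom{n-m}{s}3^{2m+1}.$$ *)

theory Defs
  imports Main
begin

text \<open>Words over the alphabet {1,2,3}, represented as lists of naturals (0-indexed).
  The statistic counts positions i (1-based: 1 <= i <= n-2) with w_{i+2} - w_i = 2.\<close>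

definition s_stat :: "nat list \<Rightarrow> nat" where
  "s_stat w = card {i. i + 2 < length w \<and> int (w ! (i + 2)) - int (w ! i) = 2}"

definition words :: "nat \<Rightarrow> nat list set" where
  "words n = {w. length w = n \<and> set w \<subseteq> {1, 2, 3}}"

end

theory Submission
  imports Defs "HOL-Computational_Algebra.Polynomial"
begin

text \<open>The statistic only compares letters two positions apart, so it is the sum of the numbers
  of steps \<open>1 \<rightarrow> 3\<close> in the two subwords formed by the odd and by the even positions. Hence
  its generating polynomial over words of length \<open>L\<close> factors as \<open>T(\<lceil>L/2\<rceil>) T(\<lfloor>L/2\<rfloor>)\<close>,
  where \<open>T(k)\<close> enumerates the words of length \<open>k\<close> by their steps \<open>1 \<rightarrow> 3\<close>. A transfer
  matrix computation shows that \<open>T\<close> satisfies \<open>T(k+2) = 3 T(k+1) - (1 - x) T(k)\<close>, i.e. it is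
  a Lucas sequence. For any such sequence, \<open>T(n)\<^sup>2\<close> and \<open>T(n+1) T(n)\<close> are sums of
  \<open>(1 - x)\<^sup>n\<^sup>-\<^sup>r T(2r)\<close> resp. \<open>(1 - x)\<^sup>n\<^sup>-\<^sup>r T(2r+1)\<close>, and \<open>T(2r)\<close>, \<open>T(2r+1)\<close> have classical
  expansions in powers of \<open>1 - x\<close>; extracting the coefficient of \<open>x\<^sup>s\<close> gives the formulas.\<close>

text \<open>\<open>lucas P Q n\<close> is the Lucas sequence \<open>U(n+1)\<close> for parameters \<open>P, Q\<close>.\<close>

fun lucas :: "'a::comm_ring_1 \<Rightarrow> 'a \<Rightarrow> nat \<Rightarrow> 'a" where
  "lucas a b 0 = 1"
| "lucas a b (Suc 0) = a"
| "lucas a b (Suc (Suc n)) = a * lucas a b (Suc n) - b * lucas a b n"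

declare lucas.simps(3) [simp del]

lemma lucas_add:
  "lucas a b (m + n + 2) = lucas a b (m + 1) * lucas a b (n + 1) - b * lucas a b m * lucas a b n"
proof (induction a b n rule: lucas.induct)
  case (1 a b)
  show ?case by (simp add: lucas.simps(3) algebra_simps)
next
  case (2 a b)
  show ?case by (simp add: lucas.simps(3) algebra_simps)
next
  case (3 a b n)
  have "lucas a b (m + Suc (Suc n) + 2)
      = a * lucas a b (m + Suc n + 2) - b * lucas a b (m + n + 2)"
    by (simp add: lucas.simps(3))
  also have "\<dots> = lucas a b (m + 1) * lucas a b (Suc (Suc n) + 1)
      - b * lucas a b m * lucas a b (Suc (Suc n))"
    unfolding 3 by (simp add: lucas.simps(3) algebra_simps)
  finally show ?case .
qed

lemma lucas_square_sum:
  "lucas a b n ^ 2 = (\<Sum>r\<le>n. b ^ (n - r) * lucas a b (2 * r))"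
proof (induction n)
  case 0 then show ?case by simp
next
  case (Suc n)
  have "lucas a b (Suc n) ^ 2 = lucas a b (2 * Suc n) + b * lucas a b n ^ 2"
    using lucas_add[of a b n n] by (simp add: power2_eq_square mult_2)
  also have "b * lucas a b n ^ 2 = (\<Sum>r\<le>n. b ^ (Suc n - r) * lucas a b (2 * r))"
    unfolding Suc sum_distrib_left by (rule sum.cong) (simp_all add: Suc_diff_le)
  finally show ?case by simp
qed

lemma lucas_Suc_mult_sum:
  "lucas a b (Suc n) * lucas a b n = (\<Sum>r\<le>n. b ^ (n - r) * lucas a b (2 * r + 1))"
proof (induction n)
  case 0 then show ?case by simp
next
  case (Suc n)
  have "lucas a b (Suc (Suc n)) * lucas a b (Suc n)
      = lucas a b (2 * Suc n + 1) + b * (lucas a b (Suc n) * lucas a b n)"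
    using lucas_add[of a b "Suc n" n] by (simp add: algebra_simps flip: mult_2)
  also have "b * (lucas a b (Suc n) * lucas a b n)
      = (\<Sum>r\<le>n. b ^ (Suc n - r) * lucas a b (2 * r + 1))"
    unfolding Suc sum_distrib_left by (rule sum.cong) (simp_all add: Suc_diff_le)
  finally show ?case by simp
qed

definition lucas_even_coeff :: "nat \<Rightarrow> nat \<Rightarrow> int" where
  "lucas_even_coeff r m = (-1) ^ (m + r) * int ((m + r) choose (2 * m))"

definition lucas_odd_coeff :: "nat \<Rightarrow> nat \<Rightarrow> int" where
  "lucas_odd_coeff r m = (-1) ^ (m + r) * int ((m + r + 1) choose (2 * m + 1))"

lemma lucas_even_coeff_eq_0: "r < m \<Longrightarrow> lucas_even_coeff r m = 0"
  by (simp add: lucas_even_coeff_def)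

lemma lucas_odd_coeff_eq_0: "r < m \<Longrightarrow> lucas_odd_coeff r m = 0"
  by (simp add: lucas_odd_coeff_def binomial_eq_0 del: binomial_Suc_Suc)

lemma lucas_even_coeff_Suc_0: "lucas_even_coeff (Suc r) 0 = - lucas_even_coeff r 0"
  by (simp add: lucas_even_coeff_def)

lemma lucas_even_coeff_Suc_Suc:
  "lucas_even_coeff (Suc r) (Suc m) = lucas_odd_coeff r m - lucas_even_coeff r (Suc m)"
proof -
  have "(Suc m + Suc r) choose (2 * Suc m)
      = ((m + r + 1) choose (2 * m + 1)) + ((Suc m + r) choose (2 * Suc m))"
    by (simp add: numeral_2_eq_2)
  then show ?thesis
    by (simp add: lucas_even_coeff_def lucas_odd_coeff_def algebra_simps)
qed

lemma lucas_odd_coeff_Suc: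
  "lucas_odd_coeff (Suc r) m = lucas_even_coeff (Suc r) m - lucas_odd_coeff r m"
proof -
  have "(m + Suc r + 1) choose (2 * m + 1)
      = ((m + Suc r) choose (2 * m)) + ((m + r + 1) choose (2 * m + 1))"
    by simp
  then show ?thesis
    by (simp add: lucas_even_coeff_def lucas_odd_coeff_def algebra_simps)
qed

lemma mult_sum_atMost_power_diff:
  fixes c :: "nat \<Rightarrow> 'a::comm_semiring_1"
  assumes "c (Suc r) = 0"
  shows "b * (\<Sum>m\<le>r. c m * b ^ (r - m)) = (\<Sum>m\<le>Suc r. c m * b ^ (Suc r - m))"
proof -
  have "b * (\<Sum>m\<le>r. c m * b ^ (r - m)) = (\<Sum>m\<le>r. c m * b ^ (Suc r - m))"
    unfolding sum_distrib_left by (rule sum.cong) (simp_all add: Suc_diff_le algebra_simps)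
  then show ?thesis using assms by simp
qed

lemma lucas_closed_form:
  "lucas a b (2 * r) = (\<Sum>m\<le>r. of_int (lucas_even_coeff r m) * a ^ (2 * m) * b ^ (r - m)) \<and>
   lucas a b (2 * r + 1) = (\<Sum>m\<le>r. of_int (lucas_odd_coeff r m) * a ^ (2 * m + 1) * b ^ (r - m))"
  (is "?E r \<and> _")
proof (induction r)
  case 0
  show ?case by (simp add: lucas_even_coeff_def lucas_odd_coeff_def)
next
  case (Suc r)
  let ?e = "\<lambda>r m. of_int (lucas_even_coeff r m) :: 'a"
  let ?o = "\<lambda>r m. of_int (lucas_odd_coeff r m) :: 'a"
  have odd_step: "a * lucas a b (2 * r + 1) = (\<Sum>m\<le>r. ?o r m * a ^ (2 * Suc m) * b ^ (r - m))"
    using Suc.IH by (simp add: sum_distrib_left algebra_simps)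
  have "b * lucas a b (2 * r) = (\<Sum>m\<le>Suc r. ?e r m * a ^ (2 * m) * b ^ (Suc r - m))"
    using Suc.IH by (simp add: mult_sum_atMost_power_diff lucas_even_coeff_eq_0)
  also have "\<dots> = ?e r 0 * b ^ Suc r + (\<Sum>m\<le>r. ?e r (Suc m) * a ^ (2 * Suc m) * b ^ (r - m))"
    by (subst sum.atMost_Suc_shift) simp
  finally have even_step: "b * lucas a b (2 * r) = \<dots>" .
  have "lucas a b (2 * Suc r) = a * lucas a b (2 * r + 1) - b * lucas a b (2 * r)"
    by (simp add: lucas.simps(3))
  also have "\<dots> = ?e (Suc r) 0 * b ^ Suc r
      + (\<Sum>m\<le>r. ?e (Suc r) (Suc m) * a ^ (2 * Suc m) * b ^ (r - m))"
    unfolding odd_step even_step lucas_even_coeff_Suc_0 lucas_even_coeff_Suc_Suc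
    by (simp add: sum_subtractf algebra_simps)
  also have "\<dots> = (\<Sum>m\<le>Suc r. ?e (Suc r) m * a ^ (2 * m) * b ^ (Suc r - m))"
    by (subst sum.atMost_Suc_shift) simp
  finally have even: "?E (Suc r)" .
  have "lucas a b (2 * Suc r + 1) = a * lucas a b (2 * Suc r) - b * lucas a b (2 * r + 1)"
    by (simp add: lucas.simps(3))
  also have "b * lucas a b (2 * r + 1) = (\<Sum>m\<le>Suc r. ?o r m * a ^ (2 * m + 1) * b ^ (Suc r - m))"
    using Suc.IH by (simp add: mult_sum_atMost_power_diff lucas_odd_coeff_eq_0)
  also have "a * lucas a b (2 * Suc r) - \<dots>
      = (\<Sum>m\<le>Suc r. ?o (Suc r) m * a ^ (2 * m + 1) * b ^ (Suc r - m))"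
    unfolding even lucas_odd_coeff_Suc by (simp add: sum_distrib_left sum_subtractf algebra_simps)
  finally show ?case using even by blast
qed

lemma lucas_square_expansion:
  "lucas a b n ^ 2
     = (\<Sum>r\<le>n. \<Sum>m\<le>r. of_int (lucas_even_coeff r m) * a ^ (2 * m) * b ^ (n - m))"
  unfolding lucas_square_sum lucas_closed_form[THEN conjunct1] sum_distrib_left
proof (intro sum.cong refl)
  fix r m assume "r \<in> {..n}" "m \<in> {..r}"
  then have "b ^ (n - m) = b ^ (n - r) * b ^ (r - m)"
    by (simp flip: power_add)
  then show "b ^ (n - r) * (of_int (lucas_even_coeff r m) * a ^ (2 * m) * b ^ (r - m))
      = of_int (lucas_even_coeff r m) * a ^ (2 * m) * b ^ (n - m)"
    by (simp add: algebra_simps)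
qed

lemma lucas_Suc_mult_expansion:
  "lucas a b (Suc n) * lucas a b n
     = (\<Sum>r\<le>n. \<Sum>m\<le>r. of_int (lucas_odd_coeff r m) * a ^ (2 * m + 1) * b ^ (n - m))"
  unfolding lucas_Suc_mult_sum lucas_closed_form[THEN conjunct2] sum_distrib_left
proof (intro sum.cong refl)
  fix r m assume "r \<in> {..n}" "m \<in> {..r}"
  then have "b ^ (n - m) = b ^ (n - r) * b ^ (r - m)"
    by (simp flip: power_add)
  then show "b ^ (n - r) * (of_int (lucas_odd_coeff r m) * a ^ (2 * m + 1) * b ^ (r - m))
      = of_int (lucas_odd_coeff r m) * a ^ (2 * m + 1) * b ^ (n - m)"
    by (simp add: algebra_simps)
qed

lemma s_stat_length_less_3: "length w < 3 \<Longrightarrow> s_stat w = 0"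
  unfolding s_stat_def by simp

lemma s_stat_Cons_Cons_Cons:
  "s_stat (a # b # c # w) = of_bool (c = a + 2) + s_stat (b # c # w)"
proof -
  define P where "P u i \<longleftrightarrow> i + 2 < length u \<and> int (u ! (i + 2)) - int (u ! i) = 2" for u i
  have "{i. P (a # b # c # w) i} = (if c = a + 2 then {0} else {}) \<union> Suc ` {i. P (b # c # w) i}"
  proof (rule set_eqI)
    show "i \<in> {i. P (a # b # c # w) i}
      \<longleftrightarrow> i \<in> (if c = a + 2 then {0} else {}) \<union> Suc ` {i. P (b # c # w) i}" for i
      by (cases i) (auto simp: P_def)
  qed
  moreover have "finite {i. P (b # c # w) i}"
    unfolding P_def by auto
  ultimately have "card {i. P (a # b # c # w) i} = of_bool (c = a + 2) + card {i. P (b # c # w) i}"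
    by (auto simp: card_image)
  then show ?thesis
    unfolding s_stat_def P_def by simp
qed

lemma finite_words: "finite (words L)"
proof -
  have "words L = {xs. set xs \<subseteq> {1, 2, 3} \<and> length xs = L}"
    unfolding words_def by auto
  then show ?thesis
    by (simp add: finite_lists_length_eq)
qed

lemma words_0: "words 0 = {[]}"
  unfolding words_def by auto

lemma sum_words_Suc:
  "(\<Sum>w\<in>words (Suc L). F w) = (\<Sum>c\<in>{1, 2, 3}. \<Sum>w\<in>words L. F (c # w))"
proof -
  have "words (Suc L) = (\<Union>c\<in>{1, 2, 3}. Cons c ` words L)"
    unfolding words_def by (auto simp: length_Suc_conv)
  then have "(\<Sum>w\<in>words (Suc L). F w) = (\<Sum>c\<in>{1, 2, 3}. \<Sum>w\<in>Cons c ` words L. F w)"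
    by (simp only:) (rule sum.UNION_disjoint, auto simp: finite_words)
  also have "\<dots> = (\<Sum>c\<in>{1, 2, 3}. \<Sum>w\<in>words L. F (c # w))"
    by (simp add: sum.reindex)
  finally show ?thesis .
qed

lemma monom_one_add: "monom (1::'a::comm_semiring_1) (i + j) = monom 1 i * monom 1 j"
  by (simp add: mult_monom)

text \<open>\<open>chain_poly k a\<close> is the sum of \<open>x\<^sup>j\<close> over all \<open>u \<in> {1,2,3}\<^sup>k\<close>, where \<open>j\<close> counts the
  steps \<open>1 \<rightarrow> 3\<close> in \<open>a # u\<close>.\<close>

fun chain_poly :: "nat \<Rightarrow> nat \<Rightarrow> int poly" where
  "chain_poly 0 a = 1"
| "chain_poly (Suc k) a = (\<Sum>c\<in>{1, 2, 3}. monom 1 (of_bool (c = a + 2)) * chain_poly k c)"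

text \<open>The letters \<open>a\<close> and \<open>b\<close> start the two interleaved chains; removing \<open>a\<close> swaps their roles.\<close>

lemma sum_words_monom_s_stat_Cons_Cons:
  "(\<Sum>w\<in>words L. monom 1 (s_stat (a # b # w)))
     = chain_poly ((L + 1) div 2) a * chain_poly (L div 2) b"
proof (induction L arbitrary: a b)
  case 0
  then show ?case by (simp add: words_0 s_stat_length_less_3)
next
  case (Suc L)
  have "(\<Sum>w\<in>words (Suc L). monom (1::int) (s_stat (a # b # w)))
      = (\<Sum>c\<in>{1, 2, 3}. monom 1 (of_bool (c = a + 2))
          * (\<Sum>w\<in>words L. monom 1 (s_stat (b # c # w))))"
    by (simp only: sum_words_Suc s_stat_Cons_Cons_Cons monom_one_add sum_distrib_left)
  also have "\<dots> = chain_poly (Suc (L div 2)) a * chain_poly ((L + 1) div 2) b"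
    by (simp only: Suc.IH chain_poly.simps sum_distrib_right) (simp only: mult_ac)
  finally show ?case by simp
qed

lemma chain_poly_eq_lucas:
  "chain_poly k 2 = lucas 3 [:1, -1:] k \<and> chain_poly k 3 = lucas 3 [:1, -1:] k \<and>
   (\<Sum>a\<in>{1, 2, 3}. chain_poly k a) = lucas 3 [:1, -1:] (Suc k)"
proof (induction k)
  case 0
  then show ?case by simp
next
  case (Suc k)
  let ?L = "lucas 3 [:1, -1:]"
  have "chain_poly k 2 = ?L k" "chain_poly k 3 = ?L k"
    using Suc.IH by simp_all
  moreover have "chain_poly k 1 = ?L (Suc k) - ?L k - ?L k"
    using Suc.IH by (simp add: algebra_simps)
  ultimately have "chain_poly (Suc k) 1 = ?L (Suc k) - [:1, -1:] * ?L k"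
    by (simp add: monom_Suc algebra_simps)
  moreover have "chain_poly (Suc k) 2 = ?L (Suc k)" "chain_poly (Suc k) 3 = ?L (Suc k)"
    using Suc.IH by simp_all
  ultimately show ?case
    by (simp add: lucas.simps(3))
qed

definition s_stat_poly :: "nat \<Rightarrow> int poly" where
  "s_stat_poly L = (\<Sum>w\<in>words L. monom 1 (s_stat w))"

lemma coeff_s_stat_poly: "coeff (s_stat_poly L) s = int (card {w \<in> words L. s_stat w = s})"
  by (simp add: s_stat_poly_def coeff_sum sum.If_cases finite_words Int_def)

lemma s_stat_poly_eq_lucas:
  "s_stat_poly L = lucas 3 [:1, -1:] ((L + 1) div 2) * lucas 3 [:1, -1:] (L div 2)"
proof -
  consider "L = 0" | "L = 1" | L' where "L = Suc (Suc L')"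
    by (metis One_nat_def not0_implies_Suc)
  then show ?thesis
  proof cases
    case 1
    then show ?thesis by (simp add: s_stat_poly_def words_0 s_stat_length_less_3)
  next
    case 2
    then show ?thesis
      by (simp add: s_stat_poly_def sum_words_Suc words_0 s_stat_length_less_3)
  next
    case 3
    have "s_stat_poly L = (\<Sum>a\<in>{1, 2, 3}. \<Sum>b\<in>{1, 2, 3}.
        chain_poly ((L' + 1) div 2) a * chain_poly (L' div 2) b)"
      unfolding s_stat_poly_def 3 by (simp only: sum_words_Suc sum_words_monom_s_stat_Cons_Cons)
    also have "\<dots> = (\<Sum>a\<in>{1, 2, 3}. chain_poly ((L' + 1) div 2) a)
        * (\<Sum>b\<in>{1, 2, 3}. chain_poly (L' div 2) b)"
      by (simp only: sum_product)
    also have "\<dots> = lucas 3 [:1, -1:] (Suc ((L' + 1) div 2)) * lucas 3 [:1, -1:] (Suc (L' div 2))"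
      by (simp only: chain_poly_eq_lucas)
    finally show ?thesis
      using 3 by simp
  qed
qed

lemma coeff_one_minus_X_power: "coeff ([:1, -1:] ^ k) s = (-1) ^ s * int (k choose s)"
proof (cases "s \<le> k")
  case True
  then show ?thesis by (simp add: coeff_linear_poly_power)
next
  case False
  then have "degree ([:1, -1::int:] ^ k) < s"
    using degree_power_le[of "[:1, -1::int:]" k] by simp
  then show ?thesis
    using False by (simp add: coeff_eq_0)
qed

lemma coeff_scaled_one_minus_X_power:
  "coeff (of_int c * 3 ^ j * [:1, -1:] ^ k) s = c * 3 ^ j * (-1) ^ s * int (k choose s)"
proof -
  have "of_int c * 3 ^ j = (of_int (c * 3 ^ j) :: int poly)"
    by simp
  then show ?thesis
    by (simp del: of_int_mult of_int_power add: of_int_poly coeff_one_minus_X_power)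
qed

theorem mainTheorem4:
  fixes n s :: nat
  shows "(int (card {w \<in> words (2 * n). s_stat w = s}) =
           (\<Sum>r = 0..n. \<Sum>m = 0..r. (-1) ^ (m + r + s) * int ((m + r) choose (2 * m))
               * int ((n - m) choose s) * 9 ^ m) \<and>
         int (card {w \<in> words (2 * n + 1). s_stat w = s}) =
           (\<Sum>r = 0..n. \<Sum>m = 0..r. (-1) ^ (m + r + s) * int ((m + r + 1) choose (2 * m + 1))
               * int ((n - m) choose s) * 3 ^ (2 * m + 1)))"
proof -
  have even: "int (card {w \<in> words (2 * n). s_stat w = s}) = coeff (lucas 3 [:1, -1:] n ^ 2) s"
    by (simp add: coeff_s_stat_poly [symmetric] s_stat_poly_eq_lucas power2_eq_square)
  have odd: "int (card {w \<in> words (2 * n + 1). s_stat w = s})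
      = coeff (lucas 3 [:1, -1:] (Suc n) * lucas 3 [:1, -1:] n) s"
    by (simp add: coeff_s_stat_poly [symmetric] s_stat_poly_eq_lucas)
  have nine: "(3::int) ^ (2 * m) = 9 ^ m" for m
    by (simp add: power_mult)
  show ?thesis
    unfolding even odd lucas_square_expansion lucas_Suc_mult_expansion
      coeff_sum coeff_scaled_one_minus_X_power nine
    by (simp add: atLeast0AtMost lucas_even_coeff_def lucas_odd_coeff_def
        power_add power_mult algebra_simps)
qed

end
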